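(* Let $(\mathbf{C}, I^{\Delta})$ be a finite-type based chain complex of real inner product spaces with Hodge basis $I^\Delta$, and let $M^\Delta$ be the Hodge matching on $(\mathbf{C},I^{\Delta})$. Then $M^\Delta$ is a Morse matching and satisfies \begin{enumerate} \item $(M^\Delta)^0_n = \ker \Delta_n$ (i.e. the critical cells in degree $n$ span $\ker\Delta_n$), where $\Delta : \mathbf{C} \to \mathbf{C}$ is the combinatorial Laplacian of $\mathbf{C}$, and \item $\partial^{M^\Delta} = 0$, where $\partial^{M^\Delta}$ is the boundary operator of the Morse chain complex $\mathbf{C}^{M^\Delta}$. \end{enumerate}
   Context: $(\mathbf{C},\partial)$ is a degree-wise finite-dimensional chain complex of real vector spaces with an inner product on each $\mathbf{C}_n$; $\partial_n^\dagger:\mathbf{C}_{n-1}\to\mathbf{C}_n$ denotes the adjoint of $\partial_n$. The combinatorial Laplacian is $\Delta_n = \partial_n^\dagger\partial_n + \partial_{n+1}\partial_{n+1}^\dagger$, with $\Delta_n^+=\partial_{n+1}\partial_{n+1}^\dagger$ and $\Delta_n^-=\partial_n^\dagger\partial_n$; one has the orthogonal Hodge decomposition $\mathbf{C}_n = \operatorname{im}\partial_{n+1}\oplus\ker\Delta_n\oplus\operatorname{im}\partial_n^\dagger$. For a linear map $f:V\to W$ of real finite-dimensional inner product spaces, singular value decomposition gives orthonormal bases $\mathcal{R}(f)$ of $V$ and $\mathcal{L}(f)$ of $W$ consisting of eigenvectors of $f^\dagger f$ and $ff^\dagger$, such that for each nonzero eigenvalue $\lambda$ there are unique $v\in\mathcal{R}(f)$,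 $w\in\mathcal{L}(f)$ with $f(v)=\sqrt{\lambda}\,w$; $\mathcal{R}_+(f),\mathcal{L}_+(f)$ denote the elements with nonzero eigenvalue. A Hodge basis is $I^\Delta=\{I^\Delta_n\}$ with $I_n^{\Delta}= \mathcal{L}_+(\partial_{n+1}) \cup \mathcal{R}_+(\partial_n) \cup \mathcal{B}(\ker\Delta_n)$ for some basis $\mathcal{B}(\ker\Delta_n)$ of $\ker\Delta_n$ (each basis vector spanning a one-dimensional summand). The Hodge matching is $M^\Delta := \bigcup_i \{ v \in \mathcal{R}_+(\partial_i) \to w \in \mathcal{L}_+(\partial_i) \mid \partial_i v = \sigma w, \sigma \neq 0 \}$. For a based complex $(\mathbf{C},I)$ with $\mathbf{C}_n=\bigoplus_{\alpha\in I_n}C_\alpha$ and components $\partial_{\beta,\alpha}:C_\alpha\to C_\beta$, the graph $\mathcal{G}(\mathbf{C})$ has vertices $I$ and edges $\alpha\to\beta$ whenever $\partial_{\beta,\alpha}\neq0$; a Morse matching $M$ is a set of edges such that each vertex is in at most one edge of $M$, each $\partial_{\beta,\alpha}$ for $\alpha\to\beta$ in $M$ is an isomorphism, and the relation "there is a directed path from $\alpha$ to $\beta$ in $\mathcal{G}(\mathbf{C})$ with the edges of $M$ reversed" is a partial order on each $I_n$. $M^0$ denotes the unmatched (critical) cells; the Morse complex $\mathbf{C}^M_n=\bigoplus_{\alpha\in I_n\cap M^0}C_\alpha$ has boundary $\partial^{M}(x)=\sum_{\beta\in M^0\cap I_{n-1}}\Gamma_{\beta,\alpha}(x)$, where $\Gamma_{\beta,\alpha}$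 is the sum over directed paths from $\alpha$ to $\beta$ in the reversed graph of the composites of components, with matched edges contributing $-\partial_{\beta,\alpha}^{-1}$. *)

theory Defs
  imports "HOL-Analysis.Analysis"
begin

text \<open>All chain groups live inside one ambient real inner product space of type 'v;
  the degree-n chain group is a finite-dimensional subspace C n (degrees are integers),
  with the restricted inner product.\<close>

definition fin_dim_subspace :: "'v::real_vector set \<Rightarrow> bool" where
  "fin_dim_subspace S \<longleftrightarrow> subspace S \<and> (\<exists>B. finite B \<and> span B = S)"

definition linear_on_sub :: "'v::real_vector set \<Rightarrow> ('v \<Rightarrow> 'w::real_vector) \<Rightarrow> bool" where
  "linear_on_sub S f \<longleftrightarrow> (\<forall>x\<in>S. \<forall>y\<in>S. f (x + y) = f x + f y) \<and> (\<forall>c. \<forall>x\<in>S. f (c *\<^sub>R x) = c *\<^sub>R f x)"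

definition chain_complex :: "(int \<Rightarrow> 'v::real_inner set) \<Rightarrow> (int \<Rightarrow> 'v \<Rightarrow> 'v) \<Rightarrow> bool" where
  "chain_complex C bd \<longleftrightarrow>
     (\<forall>n. fin_dim_subspace (C n)) \<and>
     (\<forall>n. linear_on_sub (C n) (bd n)) \<and>
     (\<forall>n. bd n ` C n \<subseteq> C (n - 1)) \<and>
     (\<forall>n. \<forall>x\<in>C n. bd (n - 1) (bd n x) = 0)"

definition adj :: "'v::real_inner set \<Rightarrow> ('v \<Rightarrow> 'v) \<Rightarrow> 'v \<Rightarrow> 'v" where
  "adj V f y = (THE x. x \<in> V \<and> (\<forall>u\<in>V. inner (f u) y = inner u x))"

definition laplacian :: "(int \<Rightarrow> 'v::real_inner set) \<Rightarrow> (int \<Rightarrow> 'v \<Rightarrow> 'v) \<Rightarrow> int \<Rightarrow> 'v \<Rightarrow> 'v" where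
  "laplacian C bd n x = adj (C n) (bd n) (bd n x) + bd (n + 1) (adj (C (n + 1)) (bd (n + 1)) x)"

definition lap_kernel :: "(int \<Rightarrow> 'v::real_inner set) \<Rightarrow> (int \<Rightarrow> 'v \<Rightarrow> 'v) \<Rightarrow> int \<Rightarrow> 'v set" where
  "lap_kernel C bd n = {x \<in> C n. laplacian C bd n x = 0}"

definition is_basis_of :: "'v::real_vector set \<Rightarrow> 'v set \<Rightarrow> bool" where
  "is_basis_of B S \<longleftrightarrow> B \<subseteq> S \<and> independent B \<and> span B = S"

definition orthonormal_basis_of :: "'v::real_inner set \<Rightarrow> 'v set \<Rightarrow> bool" where
  "orthonormal_basis_of B S \<longleftrightarrow> B \<subseteq> S \<and> span B = S \<and>
     (\<forall>x\<in>B. norm x = 1) \<and> (\<forall>x\<in>B. \<forall>y\<in>B. x \<noteq> y \<longrightarrow> inner x y = 0)"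

text \<open>R_+(f): elements of R with nonzero eigenvalue for f^dag f; L_+(f) similarly for f f^dag.\<close>
definition Rplus :: "'v::real_inner set \<Rightarrow> ('v \<Rightarrow> 'v) \<Rightarrow> 'v set \<Rightarrow> 'v set" where
  "Rplus V f R = {v \<in> R. adj V f (f v) \<noteq> 0}"

definition Lplus :: "'v::real_inner set \<Rightarrow> ('v \<Rightarrow> 'v) \<Rightarrow> 'v set \<Rightarrow> 'v set" where
  "Lplus V f L = {w \<in> L. f (adj V f w) \<noteq> 0}"

definition svd_bases :: "'v::real_inner set \<Rightarrow> 'v set \<Rightarrow> ('v \<Rightarrow> 'v) \<Rightarrow> 'v set \<Rightarrow> 'v set \<Rightarrow> bool" where
  "svd_bases V W f R L \<longleftrightarrow>
     orthonormal_basis_of R V \<and> orthonormal_basis_of L W \<and>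
     (\<forall>v\<in>R. \<exists>lam. adj V f (f v) = lam *\<^sub>R v) \<and>
     (\<forall>w\<in>L. \<exists>lam. f (adj V f w) = lam *\<^sub>R w) \<and>
     (\<exists>p. bij_betw p (Rplus V f R) (Lplus V f L) \<and>
        (\<forall>v\<in>Rplus V f R. \<exists>lam. lam \<noteq> 0 \<and> adj V f (f v) = lam *\<^sub>R v \<and> f v = sqrt lam *\<^sub>R p v))"

text \<open>R n, L n are the SVD bases of bd n : C n -> C (n-1); K n is the chosen basis of ker Delta_n.\<close>
definition hodge_basis :: "(int \<Rightarrow> 'v::real_inner set) \<Rightarrow> (int \<Rightarrow> 'v \<Rightarrow> 'v) \<Rightarrow>
    (int \<Rightarrow> 'v set) \<Rightarrow> (int \<Rightarrow> 'v set) \<Rightarrow> (int \<Rightarrow> 'v set) \<Rightarrow> int \<Rightarrow> 'v set" where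
  "hodge_basis C bd R L K n =
     Lplus (C (n + 1)) (bd (n + 1)) (L (n + 1)) \<union> Rplus (C n) (bd n) (R n) \<union> K n"

text \<open>Cells of the based complex are pairs (degree, basis vector); edges go from degree n to n-1.\<close>
type_synonym 'v cell = "int \<times> 'v"

definition hodge_matching :: "(int \<Rightarrow> 'v::real_inner set) \<Rightarrow> (int \<Rightarrow> 'v \<Rightarrow> 'v) \<Rightarrow>
    (int \<Rightarrow> 'v set) \<Rightarrow> (int \<Rightarrow> 'v set) \<Rightarrow> ('v cell \<times> 'v cell) set" where
  "hodge_matching C bd R L =
     {((i, v), (i - 1, w)) | i v w. v \<in> Rplus (C i) (bd i) (R i) \<and> w \<in> Lplus (C i) (bd i) (L i) \<and>
        (\<exists>\<sigma>. \<sigma> \<noteq> 0 \<and> bd i v = \<sigma> *\<^sub>R w)}"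

text \<open>For a based complex with one-dimensional summands span{a}, a in I n, the component
  bd_{b,a} : span{a} -> span{b} is t a |-> t * coef n a b * b.\<close>
definition coef :: "(int \<Rightarrow> 'v::real_vector \<Rightarrow> 'v) \<Rightarrow> (int \<Rightarrow> 'v set) \<Rightarrow> int \<Rightarrow> 'v \<Rightarrow> 'v \<Rightarrow> real" where
  "coef bd I n a b = representation (I (n - 1)) (bd n a) b"

definition cgraph :: "(int \<Rightarrow> 'v::real_vector \<Rightarrow> 'v) \<Rightarrow> (int \<Rightarrow> 'v set) \<Rightarrow> ('v cell \<times> 'v cell) set" where
  "cgraph bd I = {((n, a), (n - 1, b)) | n a b. a \<in> I n \<and> b \<in> I (n - 1) \<and> coef bd I n a b \<noteq> 0}"

definition reversed_graph :: "(int \<Rightarrow> 'v::real_vector \<Rightarrow> 'v) \<Rightarrow> (int \<Rightarrow> 'v set) \<Rightarrow>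
    ('v cell \<times> 'v cell) set \<Rightarrow> ('v cell \<times> 'v cell) set" where
  "reversed_graph bd I M = (cgraph bd I - M) \<union> M\<inverse>"

definition morse_matching :: "(int \<Rightarrow> 'v::real_vector \<Rightarrow> 'v) \<Rightarrow> (int \<Rightarrow> 'v set) \<Rightarrow>
    ('v cell \<times> 'v cell) set \<Rightarrow> bool" where
  "morse_matching bd I M \<longleftrightarrow>
     M \<subseteq> cgraph bd I \<and>
     (\<forall>e1\<in>M. \<forall>e2\<in>M. e1 \<noteq> e2 \<longrightarrow> {fst e1, snd e1} \<inter> {fst e2, snd e2} = {}) \<and>
     (\<forall>n a b. ((n, a), (n - 1, b)) \<in> M \<longrightarrow> coef bd I n a b \<noteq> 0) \<and>
     (\<forall>n a b. a \<in> I n \<longrightarrow> b \<in> I n \<longrightarrow>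
        ((n, a), (n, b)) \<in> (reversed_graph bd I M)\<^sup>* \<longrightarrow>
        ((n, b), (n, a)) \<in> (reversed_graph bd I M)\<^sup>* \<longrightarrow> a = b)"

definition critical :: "(int \<Rightarrow> 'v set) \<Rightarrow> ('v cell \<times> 'v cell) set \<Rightarrow> int \<Rightarrow> 'v set" where
  "critical I M n = {a \<in> I n. \<forall>e\<in>M. fst e \<noteq> (n, a) \<and> snd e \<noteq> (n, a)}"

definition edge_weight :: "(int \<Rightarrow> 'v::real_vector \<Rightarrow> 'v) \<Rightarrow> (int \<Rightarrow> 'v set) \<Rightarrow>
    ('v cell \<times> 'v cell) set \<Rightarrow> 'v cell \<times> 'v cell \<Rightarrow> real" where
  "edge_weight bd I M e =
     (case e of ((n, a), (m, b)) \<Rightarrow>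
        if e \<in> cgraph bd I - M then coef bd I n a b
        else if (snd e, fst e) \<in> M then - inverse (coef bd I m b a)
        else 0)"

definition is_path :: "('c \<times> 'c) set \<Rightarrow> 'c list \<Rightarrow> 'c \<Rightarrow> 'c \<Rightarrow> bool" where
  "is_path E p u v \<longleftrightarrow> p \<noteq> [] \<and> hd p = u \<and> last p = v \<and>
     (\<forall>i. Suc i < length p \<longrightarrow> (p ! i, p ! Suc i) \<in> E)"

text \<open>Gamma_{b,a} (as a scalar, since summands are one-dimensional): sum over directed paths
  from (n,a) to (n-1,b) in the reversed graph of the product of edge weights.\<close>
definition Gamma :: "(int \<Rightarrow> 'v::real_vector \<Rightarrow> 'v) \<Rightarrow> (int \<Rightarrow> 'v set) \<Rightarrow>
    ('v cell \<times> 'v cell) set \<Rightarrow> int \<Rightarrow> 'v \<Rightarrow> 'v \<Rightarrow> real" where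
  "Gamma bd I M n a b =
     (\<Sum>p\<in>{p. is_path (reversed_graph bd I M) p (n, a) (n - 1, b)}.
        prod_list (map (edge_weight bd I M) (zip p (tl p))))"

definition morse_boundary :: "(int \<Rightarrow> 'v::real_vector \<Rightarrow> 'v) \<Rightarrow> (int \<Rightarrow> 'v set) \<Rightarrow>
    ('v cell \<times> 'v cell) set \<Rightarrow> int \<Rightarrow> 'v \<Rightarrow> 'v" where
  "morse_boundary bd I M n x =
     (\<Sum>a\<in>critical I M n. \<Sum>b\<in>critical I M (n - 1).
        (representation (I n) x a * Gamma bd I M n a b) *\<^sub>R b)"

end

theory Submission
  imports Defs
begin

text \<open>In the Hodge basis the boundary sends each right singular vector in \<open>R\<^sub>+(\<partial>\<^sub>n)\<close> to a
  nonzero multiple of its partner in \<open>L\<^sub>+(\<partial>\<^sub>n)\<close>, and it kills \<open>L\<^sub>+(\<partial>\<^sub>n\<^sub>+\<^sub>1)\<close> (boundaries)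
  and \<open>ker \<Delta>\<^sub>n\<close> (harmonic chains). Hence the edges of the graph of the based complex are exactly
  the edges of the Hodge matching. Once they are reversed, every edge raises the degree: the
  matching is acyclic, no path leads from degree \<open>n\<close> down to degree \<open>n - 1\<close>, so every \<open>\<Gamma>\<close>
  vanishes, and the unmatched cells are precisely the chosen basis of \<open>ker \<Delta>\<^sub>n\<close>.\<close>

lemma linear_on_sub_zero:
  assumes "linear_on_sub V f" "0 \<in> V"
  shows "f 0 = 0"
  using assms unfolding linear_on_sub_def by (metis scale_zero_left)

lemma linear_on_sub_sum:
  assumes "linear_on_sub V f" "subspace V" "finite S" "\<forall>x\<in>S. g x \<in> V"
  shows "f (\<Sum>x\<in>S. g x) = (\<Sum>x\<in>S. f (g x))"
  using assms(3,4)
proof (induction S rule: finite_induct)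
  case empty
  then show ?case using linear_on_sub_zero[OF assms(1)] assms(2) subspace_0 by auto
next
  case (insert x F)
  have "(\<Sum>x\<in>F. g x) \<in> V" using insert assms(2) by (auto intro: subspace_sum)
  then show ?case using insert assms(1) unfolding linear_on_sub_def by auto
qed

lemma orthonormal_basis_of_independent:
  "orthonormal_basis_of B V \<Longrightarrow> independent B"
  unfolding orthonormal_basis_of_def
  by (intro pairwise_orthogonal_independent) (auto simp: pairwise_def orthogonal_def)

lemma orthonormal_basis_of_finite:
  assumes "fin_dim_subspace V" "orthonormal_basis_of B V"
  shows "finite B"
proof -
  obtain T where "finite T" "span T = V" using assms(1) unfolding fin_dim_subspace_def by auto
  then show ?thesis
    using independent_span_bound[OF _ orthonormal_basis_of_independent[OF assms(2)]] assms(2)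
    unfolding orthonormal_basis_of_def by auto
qed

lemma orthonormal_basis_expansion:
  assumes "fin_dim_subspace V" "orthonormal_basis_of B V" "u \<in> V"
  shows "u = (\<Sum>e\<in>B. inner u e *\<^sub>R e)"
proof -
  have fin: "finite B" using orthonormal_basis_of_finite[OF assms(1,2)] .
  have ind: "independent B" using orthonormal_basis_of_independent[OF assms(2)] .
  have "u \<in> span B" using assms(2,3) unfolding orthonormal_basis_of_def by auto
  then have expand: "u = (\<Sum>e\<in>B. representation B u e *\<^sub>R e)"
    using sum_representation_eq[OF ind _ fin] by simp
  have "inner u e' = representation B u e'" if "e' \<in> B" for e'
  proof -
    have "inner u e' = (\<Sum>e\<in>B. representation B u e * inner e e')"
      by (subst expand) (simp add: inner_sum_left)
    also have "\<dots> = (\<Sum>e\<in>B. if e = e' then representation B u e else 0)"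
      using assms(2) that unfolding orthonormal_basis_of_def
      by (intro sum.cong) (auto simp: dot_square_norm)
    also have "\<dots> = representation B u e'" using fin that by simp
    finally show ?thesis .
  qed
  then show ?thesis using expand by (metis (no_types, lifting) sum.cong)
qed

lemma orthonormal_basis_scaleR_cancel:
  assumes "orthonormal_basis_of B V" "w1 \<in> B" "w2 \<in> B" "s1 \<noteq> 0" "s1 *\<^sub>R w1 = s2 *\<^sub>R w2"
  shows "w1 = w2"
proof (rule ccontr)
  assume "w1 \<noteq> w2"
  have "s1 * (norm w1)\<^sup>2 = s2 * inner w2 w1"
    using arg_cong[OF assms(5), of "\<lambda>x. inner x w1"] by (simp add: dot_square_norm)
  then show False using assms \<open>w1 \<noteq> w2\<close> unfolding orthonormal_basis_of_def by auto
qed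

text \<open>The adjoint in \<^const>\<open>adj\<close> is a definite description; on a finite-dimensional subspace
  it exists, namely \<open>\<Sum>\<^sub>e \<langle>f e, y\<rangle> e\<close> over an orthonormal basis.\<close>

lemma adj_characterization:
  assumes "fin_dim_subspace V" "orthonormal_basis_of B V" "linear_on_sub V f"
  shows "adj V f y \<in> V" and "\<forall>u\<in>V. inner (f u) y = inner u (adj V f y)"
proof -
  have fin: "finite B" using orthonormal_basis_of_finite[OF assms(1,2)] .
  have sub: "subspace V" using assms(1) unfolding fin_dim_subspace_def by auto
  have BV: "B \<subseteq> V" using assms(2) unfolding orthonormal_basis_of_def by auto
  define x where "x = (\<Sum>e\<in>B. inner (f e) y *\<^sub>R e)"
  have xV: "x \<in> V" unfolding x_def using BV sub
    by (intro subspace_sum) (auto intro: subspace_scale)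
  have x_adj: "\<forall>u\<in>V. inner (f u) y = inner u x"
  proof
    fix u assume uV: "u \<in> V"
    have "f u = f (\<Sum>e\<in>B. inner u e *\<^sub>R e)"
      using orthonormal_basis_expansion[OF assms(1,2) uV] by simp
    also have "\<dots> = (\<Sum>e\<in>B. f (inner u e *\<^sub>R e))"
      using BV sub by (intro linear_on_sub_sum[OF assms(3) sub fin]) (auto simp: subspace_scale)
    also have "\<dots> = (\<Sum>e\<in>B. inner u e *\<^sub>R f e)"
      using assms(3) BV unfolding linear_on_sub_def by (intro sum.cong) auto
    finally have "inner (f u) y = (\<Sum>e\<in>B. inner u e * inner (f e) y)"
      by (simp add: inner_sum_left)
    also have "\<dots> = inner u x" unfolding x_def by (simp add: inner_sum_right mult.commute)
    finally show "inner (f u) y = inner u x" .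
  qed
  have unique: "z = x" if "z \<in> V" "\<forall>u\<in>V. inner (f u) y = inner u z" for z
  proof -
    have "z - x \<in> V" using that xV sub by (simp add: subspace_diff)
    then have "inner (z - x) z = inner (z - x) x" using that x_adj by metis
    then have "inner (z - x) (z - x) = 0" by (simp add: inner_diff_right)
    then show ?thesis by simp
  qed
  have "adj V f y = x" unfolding adj_def using xV x_adj unique by (intro the_equality) auto
  then show "adj V f y \<in> V" "\<forall>u\<in>V. inner (f u) y = inner u (adj V f y)" using xV x_adj by simp_all
qed

lemma independent_Un_orthogonal:
  fixes A K :: "'v::real_inner set"
  assumes "finite A" "0 \<notin> A" "pairwise orthogonal A" "\<forall>a\<in>A. \<forall>k\<in>K. orthogonal a k"
    "independent K"
  shows "independent (A \<union> K)"
  using assms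
proof (induction A rule: finite_induct)
  case empty
  then show ?case by simp
next
  case (insert a A)
  have "independent (A \<union> K)"
    using insert by (auto simp: pairwise_insert)
  moreover have "a \<notin> span (A \<union> K)"
  proof
    assume "a \<in> span (A \<union> K)"
    moreover have "orthogonal a y" if "y \<in> A \<union> K" for y
      using insert.hyps(2) insert.prems(2,3) that by (auto simp: pairwise_insert)
    ultimately have "orthogonal a a" by (rule orthogonal_to_span)
    then show False using insert.prems(1) by (simp add: orthogonal_def)
  qed
  ultimately show ?case by (simp add: independent_insertI)
qed

lemma is_path_rtrancl:
  assumes "is_path E p u v"
  shows "(u, v) \<in> E\<^sup>*"
proof -
  have ne: "p \<noteq> []" and hd: "hd p = u" and last: "last p = v"
    and step: "\<forall>i. Suc i < length p \<longrightarrow> (p ! i, p ! Suc i) \<in> E"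
    using assms unfolding is_path_def by auto
  have "i < length p \<longrightarrow> (u, p ! i) \<in> E\<^sup>*" for i
  proof (induction i)
    case 0
    then show ?case using ne hd by (simp add: hd_conv_nth)
  next
    case (Suc i)
    then show ?case using step by (meson Suc_lessD rtrancl.rtrancl_into_rtrancl)
  qed
  then have "(u, p ! (length p - 1)) \<in> E\<^sup>*" using ne by simp
  then show ?thesis using ne last by (simp add: last_conv_nth)
qed

lemma rtrancl_increasing_eq_or_less:
  fixes f :: "'a \<Rightarrow> 'b::order"
  assumes "\<forall>(x, y)\<in>E. f x < f y" "(x, y) \<in> E\<^sup>*"
  shows "x = y \<or> f x < f y"
  using assms(2)
proof (induction rule: rtrancl_induct)
  case base
  then show ?case by simp
next
  case (step y z)
  then show ?case using assms(1) by (auto intro: order.strict_trans)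
qed

locale hodge_setup =
  fixes C :: "int \<Rightarrow> 'v::real_inner set"
    and bd :: "int \<Rightarrow> 'v \<Rightarrow> 'v"
    and R L K :: "int \<Rightarrow> 'v set"
  assumes chain: "chain_complex C bd"
    and svd: "\<forall>n. svd_bases (C n) (C (n - 1)) (bd n) (R n) (L n)"
    and kernel_basis: "\<forall>n. is_basis_of (K n) (lap_kernel C bd n)"
begin

abbreviation "cobd n \<equiv> adj (C n) (bd n)"
abbreviation "Rp n \<equiv> Rplus (C n) (bd n) (R n)"
abbreviation "Lp n \<equiv> Lplus (C n) (bd n) (L n)"
abbreviation "I \<equiv> hodge_basis C bd R L K"
abbreviation "M \<equiv> hodge_matching C bd R L"

lemma fin_dim: "fin_dim_subspace (C n)"
  using chain unfolding chain_complex_def by auto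

lemma subspace_C: "subspace (C n)"
  using fin_dim unfolding fin_dim_subspace_def by auto

lemma linear_bd: "linear_on_sub (C n) (bd n)"
  using chain unfolding chain_complex_def by auto

lemma bd_in: "x \<in> C n \<Longrightarrow> bd n x \<in> C (n - 1)"
  using chain unfolding chain_complex_def by blast

lemma bd_bd: "x \<in> C n \<Longrightarrow> bd (n - 1) (bd n x) = 0"
  using chain unfolding chain_complex_def by auto

lemma bd_scaleR: "x \<in> C n \<Longrightarrow> bd n (c *\<^sub>R x) = c *\<^sub>R bd n x"
  using linear_bd unfolding linear_on_sub_def by auto

lemma onb_R: "orthonormal_basis_of (R n) (C n)"
  using svd unfolding svd_bases_def by auto

lemma onb_L: "orthonormal_basis_of (L n) (C (n - 1))"
  using svd unfolding svd_bases_def by auto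

lemma cobd_in: "cobd n y \<in> C n"
  using adj_characterization[OF fin_dim onb_R linear_bd] by auto

lemma inner_bd_cobd: "u \<in> C n \<Longrightarrow> inner (bd n u) y = inner u (cobd n y)"
  using adj_characterization[OF fin_dim onb_R linear_bd] by auto

lemma K_subset: "K n \<subseteq> lap_kernel C bd n"
  and independent_K: "independent (K n)"
  and span_K: "span (K n) = lap_kernel C bd n"
  using kernel_basis unfolding is_basis_of_def by auto

lemma svd_pairing:
  obtains p where "bij_betw p (Rp n) (Lp n)" "\<forall>v\<in>Rp n. \<exists>s. s \<noteq> 0 \<and> bd n v = s *\<^sub>R p v"
proof -
  obtain p where "bij_betw p (Rp n) (Lp n)"
    and "\<forall>v\<in>Rp n. \<exists>lam. lam \<noteq> 0 \<and> cobd n (bd n v) = lam *\<^sub>R v \<and> bd n v = sqrt lam *\<^sub>R p v"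
    using svd unfolding svd_bases_def by blast
  then show ?thesis using that by (metis real_sqrt_eq_zero_cancel_iff)
qed

lemma Rplus_eigenvector:
  assumes "v \<in> Rp n"
  shows "\<exists>lam. lam \<noteq> 0 \<and> cobd n (bd n v) = lam *\<^sub>R v"
proof -
  obtain lam where "cobd n (bd n v) = lam *\<^sub>R v"
    using assms svd unfolding svd_bases_def Rplus_def by blast
  moreover have "cobd n (bd n v) \<noteq> 0" using assms unfolding Rplus_def by auto
  ultimately show ?thesis by auto
qed

lemma Lplus_boundary:
  assumes "w \<in> Lp m"
  shows "\<exists>u\<in>C m. w = bd m u"
proof -
  obtain lam where eig: "bd m (cobd m w) = lam *\<^sub>R w"
    using assms svd unfolding svd_bases_def Lplus_def by blast
  moreover have "bd m (cobd m w) \<noteq> 0" using assms unfolding Lplus_def by auto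
  ultimately have "lam \<noteq> 0" by auto
  then have "bd m ((1 / lam) *\<^sub>R cobd m w) = w" using bd_scaleR[OF cobd_in] eig by simp
  moreover have "(1 / lam) *\<^sub>R cobd m w \<in> C m" using cobd_in subspace_C subspace_scale by blast
  ultimately show ?thesis by metis
qed

lemma Lplus_cycle:
  assumes "w \<in> Lp (n + 1)"
  shows "bd n w = 0"
  using Lplus_boundary[OF assms] bd_bd[of _ "n + 1"] by auto

lemma lap_kernel_cycle_cocycle:
  assumes "k \<in> lap_kernel C bd n"
  shows "bd n k = 0" and "cobd (n + 1) k = 0"
proof -
  have k: "k \<in> C n" "laplacian C bd n k = 0" using assms unfolding lap_kernel_def by auto
  have "0 = inner k (laplacian C bd n k)" using k by simp
  also have "\<dots> = inner (bd n k) (bd n k) + inner (cobd (n + 1) k) (cobd (n + 1) k)"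
    unfolding laplacian_def
    using inner_bd_cobd[OF k(1), of "bd n k"] inner_bd_cobd[OF cobd_in, of "n + 1" k k]
    by (simp add: inner_add_right inner_commute)
  finally show "bd n k = 0" "cobd (n + 1) k = 0"
    by (simp_all add: add_nonneg_eq_0_iff)
qed

lemma Lplus_orthogonal_Rplus:
  assumes "w \<in> Lp (n + 1)" "v \<in> Rp n"
  shows "orthogonal w v"
proof -
  obtain lam where lam: "lam \<noteq> 0" "cobd n (bd n v) = lam *\<^sub>R v"
    using Rplus_eigenvector[OF assms(2)] by auto
  obtain u where "u \<in> C (n + 1)" "w = bd (n + 1) u" using Lplus_boundary[OF assms(1)] by auto
  then have "w \<in> C n" using bd_in by fastforce
  then have "inner w (cobd n (bd n v)) = inner (bd n w) (bd n v)" using inner_bd_cobd by simp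
  then show ?thesis using lam Lplus_cycle[OF assms(1)] by (simp add: orthogonal_def)
qed

lemma lap_kernel_orthogonal_Lplus:
  assumes "k \<in> lap_kernel C bd n" "w \<in> Lp (n + 1)"
  shows "orthogonal w k"
proof -
  obtain u where "u \<in> C (n + 1)" "w = bd (n + 1) u" using Lplus_boundary[OF assms(2)] by auto
  then show ?thesis
    using inner_bd_cobd lap_kernel_cycle_cocycle(2)[OF assms(1)] by (simp add: orthogonal_def)
qed

lemma lap_kernel_orthogonal_Rplus:
  assumes "k \<in> lap_kernel C bd n" "v \<in> Rp n"
  shows "orthogonal v k"
proof -
  have "k \<in> C n" using assms unfolding lap_kernel_def by auto
  moreover obtain lam where "lam \<noteq> 0" "cobd n (bd n v) = lam *\<^sub>R v"
    using Rplus_eigenvector[OF assms(2)] by auto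
  ultimately show ?thesis
    using inner_bd_cobd[of k n "bd n v"] lap_kernel_cycle_cocycle(1)[OF assms(1)]
    by (simp add: orthogonal_def inner_commute)
qed

lemma independent_hodge_basis: "independent (I n)"
proof -
  let ?A = "Lp (n + 1) \<union> Rp n"
  have "?A \<subseteq> L (n + 1) \<union> R n" unfolding Lplus_def Rplus_def by auto
  moreover have "finite (L (n + 1) \<union> R n)"
    using orthonormal_basis_of_finite[OF fin_dim onb_L] orthonormal_basis_of_finite[OF fin_dim onb_R]
    by simp
  ultimately have "finite ?A" by (rule finite_subset)
  moreover have "0 \<notin> ?A"
    using onb_L[of "n + 1"] onb_R[of n] unfolding orthonormal_basis_of_def Lplus_def Rplus_def
    by force
  moreover have "pairwise orthogonal ?A"
  proof (rule pairwiseI)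
    fix x y assume "x \<in> ?A" "y \<in> ?A" "x \<noteq> y"
    then show "orthogonal x y"
      using onb_L[of "n + 1"] onb_R[of n] Lplus_orthogonal_Rplus orthogonal_commute
      unfolding orthonormal_basis_of_def orthogonal_def Lplus_def Rplus_def by blast
  qed
  moreover have "\<forall>a\<in>?A. \<forall>k\<in>K n. orthogonal a k"
    using K_subset lap_kernel_orthogonal_Lplus lap_kernel_orthogonal_Rplus by blast
  ultimately have "independent (?A \<union> K n)"
    using independent_K by (rule independent_Un_orthogonal)
  then show ?thesis unfolding hodge_basis_def .
qed

lemma Rplus_disjoint_Lplus: "Rp n \<inter> Lp (n + 1) = {}"
  using Lplus_orthogonal_Rplus onb_R unfolding orthonormal_basis_of_def Rplus_def
  by (fastforce simp: orthogonal_def)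

lemma lap_kernel_basis_unmatched: "K n \<inter> (Rp n \<union> Lp (n + 1)) = {}"
proof -
  have "0 \<notin> K n" using independent_K dependent_zero by blast
  moreover have "orthogonal a a" if "a \<in> K n" "a \<in> Rp n \<union> Lp (n + 1)" for a
    using that K_subset lap_kernel_orthogonal_Rplus lap_kernel_orthogonal_Lplus by blast
  ultimately show ?thesis by (auto simp: orthogonal_def)
qed

lemma coef_scaleR:
  assumes "bd n a = s *\<^sub>R w" "w \<in> I (n - 1)"
  shows "coef bd I n a b = (if b = w then s else 0)"
  unfolding coef_def assms(1) using independent_hodge_basis assms(2)
  by (simp add: representation_scale span_base representation_basis)

lemma hodge_matching_iff:
  "((i, v), (j, w)) \<in> M \<longleftrightarrow>
     j = i - 1 \<and> v \<in> Rp i \<and> w \<in> Lp i \<and> (\<exists>\<sigma>. \<sigma> \<noteq> 0 \<and> bd i v = \<sigma> *\<^sub>R w)"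
  unfolding hodge_matching_def by auto

lemma hodge_matching_pairing:
  assumes "bij_betw p (Rp n) (Lp n)" "\<forall>v\<in>Rp n. \<exists>s. s \<noteq> 0 \<and> bd n v = s *\<^sub>R p v"
  shows "((n, v), (n - 1, w)) \<in> M \<longleftrightarrow> v \<in> Rp n \<and> w = p v"
proof
  assume "((n, v), (n - 1, w)) \<in> M"
  then obtain \<sigma> where v: "v \<in> Rp n" and w: "w \<in> Lp n" and "\<sigma> \<noteq> 0" "bd n v = \<sigma> *\<^sub>R w"
    by (auto simp: hodge_matching_iff)
  moreover obtain s where "bd n v = s *\<^sub>R p v" using assms(2) v by blast
  moreover have "p v \<in> Lp n" using assms(1) v by (auto dest: bij_betwE)
  ultimately have "w = p v"
    using orthonormal_basis_scaleR_cancel[OF onb_L, of w n "p v" \<sigma> s] unfolding Lplus_def by auto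
  with v show "v \<in> Rp n \<and> w = p v" by blast
next
  assume "v \<in> Rp n \<and> w = p v"
  moreover from this have "p v \<in> Lp n" using assms(1) by (auto dest: bij_betwE)
  ultimately show "((n, v), (n - 1, w)) \<in> M" using assms(2) by (auto simp: hodge_matching_iff)
qed

lemma hodge_matching_vertex_iff:
  "(\<exists>e\<in>M. (n, a) \<in> {fst e, snd e}) \<longleftrightarrow> a \<in> Rp n \<union> Lp (n + 1)"
proof
  assume "\<exists>e\<in>M. (n, a) \<in> {fst e, snd e}"
  then show "a \<in> Rp n \<union> Lp (n + 1)" unfolding hodge_matching_def by auto
next
  assume "a \<in> Rp n \<union> Lp (n + 1)"
  then consider "a \<in> Rp n" | "a \<in> Lp (n + 1)" by blast
  then show "\<exists>e\<in>M. (n, a) \<in> {fst e, snd e}"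
  proof cases
    case 1
    obtain p where p: "bij_betw p (Rp n) (Lp n)" "\<forall>v\<in>Rp n. \<exists>s. s \<noteq> 0 \<and> bd n v = s *\<^sub>R p v"
      by (rule svd_pairing)
    then have "((n, a), (n - 1, p a)) \<in> M" using 1 hodge_matching_pairing by blast
    then show ?thesis by force
  next
    case 2
    obtain p where p: "bij_betw p (Rp (n + 1)) (Lp (n + 1))"
      "\<forall>v\<in>Rp (n + 1). \<exists>s. s \<noteq> 0 \<and> bd (n + 1) v = s *\<^sub>R p v"
      by (rule svd_pairing)
    then obtain v where "v \<in> Rp (n + 1)" "a = p v" using 2 by (auto simp: bij_betw_def)
    then have "((n + 1, v), (n + 1 - 1, a)) \<in> M" using p hodge_matching_pairing by blast
    then show ?thesis by force
  qed
qed

lemma hodge_matching_disjoint: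
  assumes "e1 \<in> M" "e2 \<in> M" "e1 \<noteq> e2"
  shows "{fst e1, snd e1} \<inter> {fst e2, snd e2} = {}"
proof -
  obtain i v1 w1 where e1: "e1 = ((i, v1), (i - 1, w1))" "v1 \<in> Rp i" "w1 \<in> Lp i"
    using assms(1) unfolding hodge_matching_def by blast
  obtain j v2 w2 where e2: "e2 = ((j, v2), (j - 1, w2))" "v2 \<in> Rp j" "w2 \<in> Lp j"
    using assms(2) unfolding hodge_matching_def by blast
  have same_ends: "v1 = v2 \<longleftrightarrow> w1 = w2" if "i = j"
  proof -
    obtain p where p: "bij_betw p (Rp i) (Lp i)" "\<forall>v\<in>Rp i. \<exists>s. s \<noteq> 0 \<and> bd i v = s *\<^sub>R p v"
      by (rule svd_pairing)
    have "w1 = p v1" "w2 = p v2"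
      using assms(1,2) e1 e2 that hodge_matching_pairing[OF p] by auto
    then show ?thesis using p(1) e1(2) e2(2) that by (auto simp: bij_betw_def dest: inj_onD)
  qed
  have "(i, v1) \<noteq> (j - 1, w2)" "(j, v2) \<noteq> (i - 1, w1)"
    using Rplus_disjoint_Lplus e1 e2 by fastforce+
  then show ?thesis using assms(3) e1(1) e2(1) same_ends by auto
qed

lemma cgraph_hodge_basis: "cgraph bd I = M"
proof
  show "cgraph bd I \<subseteq> M"
  proof
    fix e assume "e \<in> cgraph bd I"
    then obtain n a b where e: "e = ((n, a), (n - 1, b))" "a \<in> I n" "coef bd I n a b \<noteq> 0"
      unfolding cgraph_def by blast
    have "bd n a \<noteq> 0" using e(3) unfolding coef_def by (metis representation_zero)
    then have "a \<notin> Lp (n + 1)" "a \<notin> K n"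
      using Lplus_cycle K_subset lap_kernel_cycle_cocycle(1) by blast+
    then have a: "a \<in> Rp n" using e(2) unfolding hodge_basis_def by blast
    obtain p where p: "bij_betw p (Rp n) (Lp n)" "\<forall>v\<in>Rp n. \<exists>s. s \<noteq> 0 \<and> bd n v = s *\<^sub>R p v"
      by (rule svd_pairing)
    obtain s where "bd n a = s *\<^sub>R p a" using p(2) a by blast
    moreover have "p a \<in> I (n - 1)" using p(1) a unfolding hodge_basis_def by (auto dest: bij_betwE)
    ultimately have "b = p a" using e(3) coef_scaleR[of n a s "p a" b] by presburger
    then show "e \<in> M" using e(1) a hodge_matching_pairing[OF p] by blast
  qed
next
  show "M \<subseteq> cgraph bd I"
  proof
    fix e assume "e \<in> M"
    then obtain n v w \<sigma> where e: "e = ((n, v), (n - 1, w))" "v \<in> Rp n" "w \<in> Lp n"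
      "\<sigma> \<noteq> 0" "bd n v = \<sigma> *\<^sub>R w"
      unfolding hodge_matching_def by blast
    have "v \<in> I n" "w \<in> I (n - 1)" using e(2,3) unfolding hodge_basis_def by auto
    moreover from this have "coef bd I n v w \<noteq> 0" using e(4,5) coef_scaleR by simp
    ultimately show "e \<in> cgraph bd I" unfolding cgraph_def e(1) by blast
  qed
qed

lemma reversed_graph_hodge_basis: "reversed_graph bd I M = M\<inverse>"
  unfolding reversed_graph_def cgraph_hodge_basis by simp

lemma reversed_path_raises_degree:
  assumes "(x, y) \<in> (reversed_graph bd I M)\<^sup>*"
  shows "x = y \<or> fst x < fst y"
proof (rule rtrancl_increasing_eq_or_less[where E = "M\<inverse>"])
  show "\<forall>(x, y)\<in>M\<inverse>. fst x < fst y" unfolding hodge_matching_def by auto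
  show "(x, y) \<in> (M\<inverse>)\<^sup>*" using assms unfolding reversed_graph_hodge_basis .
qed

lemma morse_matching_hodge: "morse_matching bd I M"
  unfolding morse_matching_def
proof (intro conjI allI impI ballI)
  show "M \<subseteq> cgraph bd I" by (simp add: cgraph_hodge_basis)
next
  fix e1 e2 assume "e1 \<in> M" "e2 \<in> M" "e1 \<noteq> e2"
  then show "{fst e1, snd e1} \<inter> {fst e2, snd e2} = {}" by (rule hodge_matching_disjoint)
next
  fix n a b assume "((n, a), (n - 1, b)) \<in> M"
  then show "coef bd I n a b \<noteq> 0"
    unfolding cgraph_hodge_basis[symmetric] cgraph_def by auto
next
  fix n a b assume "((n, a), (n, b)) \<in> (reversed_graph bd I M)\<^sup>*"
  then show "a = b" using reversed_path_raises_degree by fastforce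
qed

lemma critical_hodge_basis: "critical I M n = K n"
proof -
  have "critical I M n = {a \<in> I n. \<not> (\<exists>e\<in>M. (n, a) \<in> {fst e, snd e})}"
    unfolding critical_def by auto
  also have "\<dots> = I n - (Rp n \<union> Lp (n + 1))"
    unfolding hodge_matching_vertex_iff by auto
  also have "\<dots> = K n"
    using lap_kernel_basis_unmatched[of n] unfolding hodge_basis_def by auto
  finally show ?thesis .
qed

lemma Gamma_hodge_basis: "Gamma bd I M n a b = 0"
proof -
  have "\<not> is_path (reversed_graph bd I M) p (n, a) (n - 1, b)" for p
    using reversed_path_raises_degree[OF is_path_rtrancl] by fastforce
  then show ?thesis unfolding Gamma_def by simp
qed

end

theorem mainTheorem3:
  fixes C :: "int \<Rightarrow> 'v::real_inner set"
    and bd :: "int \<Rightarrow> 'v \<Rightarrow> 'v"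
    and R L K :: "int \<Rightarrow> 'v set"
  assumes "chain_complex C bd"
    and "\<forall>n. svd_bases (C n) (C (n - 1)) (bd n) (R n) (L n)"
    and "\<forall>n. is_basis_of (K n) (lap_kernel C bd n)"
  shows "morse_matching bd (hodge_basis C bd R L K) (hodge_matching C bd R L)
    \<and> (\<forall>n. span (critical (hodge_basis C bd R L K) (hodge_matching C bd R L) n) = lap_kernel C bd n)
    \<and> (\<forall>n. \<forall>x\<in>span (critical (hodge_basis C bd R L K) (hodge_matching C bd R L) n).
          morse_boundary bd (hodge_basis C bd R L K) (hodge_matching C bd R L) n x = 0)"
proof -
  interpret hodge_setup C bd R L K using assms by unfold_locales
  show ?thesis
    using morse_matching_hodge critical_hodge_basis span_K Gamma_hodge_basis
    unfolding morse_boundary_def by simp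
qed

end
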